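(* Let $T$ be a set of three affinely independent points in $\mathbb{N}_0^2$. Then for every $\alpha\in T$ there exists a point $\beta\in E_1^\infty(T)\setminus\{\alpha\}$ such that $\beta-\alpha\in\mathbb{N}^2$ (both entries strictly positive).
   Context: $\mathbb{N}=\{1,2,\dots\}$, $\mathbb{N}_0=\{0,1,2,\dots\}$. For nonempty $\Gamma\subseteq\mathbb{N}_0^d$, $\Lambda(\Gamma)$ is the coset in $\mathbb{Z}^d$ generated by $\Gamma$ (smallest coset of a subgroup of $\mathbb{Z}^d$ containing $\Gamma$); each $\lambda\in\Lambda(\Gamma)$ can be written $\lambda=\gamma+\sum_{\alpha\in\Gamma,\alpha\neq\gamma}m_{\gamma,\alpha}(\alpha-\gamma)$ with $\gamma\in\Gamma$ and integers $m_{\gamma,\alpha}$, finitely many nonzero. $d(\Gamma,\lambda)$ is the infimum over all such representations of $\max\big(\sum_{m_{\gamma,\alpha}>0}m_{\gamma,\alpha},-\sum_{m_{\gamma,\alpha}<0}m_{\gamma,\alpha}\big)$, and $E_n(\Gamma)=\{\lambda\in\Lambda(\Gamma)\cap\mathbb{N}_0^d:d(\Gamma,\lambda)\leq n\}$. Set $E_n^1(T)=E_n(T)$, $E_n^{k+1}(T)=E_n(E_n^k(T))$, and $E_n^\infty(T)=\bigcup_{k\geq1}E_n^k(T)$. *)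

theory Defs
  imports "HOL-Analysis.Analysis" "HOL-Library.Extended_Nat"
begin

type_synonym pt = "int \<times> int"

definition smul :: "int \<Rightarrow> pt \<Rightarrow> pt" where
  "smul c v = (c * fst v, c * snd v)"

definition in_N0sq :: "pt \<Rightarrow> bool" where
  "in_N0sq v \<longleftrightarrow> fst v \<ge> 0 \<and> snd v \<ge> 0"

definition is_rep :: "pt set \<Rightarrow> pt \<Rightarrow> pt \<Rightarrow> (pt \<Rightarrow> int) \<Rightarrow> bool" where
  "is_rep G lam g m \<longleftrightarrow> g \<in> G \<and> finite {a. m a \<noteq> 0}
     \<and> (\<forall>a. m a \<noteq> 0 \<longrightarrow> a \<in> G \<and> a \<noteq> g)
     \<and> lam = g + (\<Sum>a\<in>{a. m a \<noteq> 0}. smul (m a) (a - g))"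

definition Lam :: "pt set \<Rightarrow> pt set" where
  "Lam G = {lam. \<exists>g m. is_rep G lam g m}"

definition rep_cost :: "(pt \<Rightarrow> int) \<Rightarrow> nat" where
  "rep_cost m = nat (max (\<Sum>a\<in>{a. m a > 0}. m a) (- (\<Sum>a\<in>{a. m a < 0}. m a)))"

definition dG :: "pt set \<Rightarrow> pt \<Rightarrow> enat" where
  "dG G lam = (INF gm \<in> {(g, m). is_rep G lam g m}. enat (rep_cost (snd gm)))"

definition En :: "nat \<Rightarrow> pt set \<Rightarrow> pt set" where
  "En n G = {lam \<in> Lam G. in_N0sq lam \<and> dG G lam \<le> enat n}"

text \<open>En_iter n k T = E_n^{k+1}(T).\<close>
fun En_iter :: "nat \<Rightarrow> nat \<Rightarrow> pt set \<Rightarrow> pt set" where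
  "En_iter n 0 T = En n T"
| "En_iter n (Suc k) T = En n (En_iter n k T)"

definition En_inf :: "nat \<Rightarrow> pt set \<Rightarrow> pt set" where
  "En_inf n T = (\<Union>k. En_iter n k T)"

definition to_real2 :: "pt \<Rightarrow> real \<times> real" where
  "to_real2 v = (real_of_int (fst v), real_of_int (snd v))"

end

theory Submission
  imports Defs
begin

(* Every point x - y + z with x, y, z in G has a representation over G of cost at most 1, so
   S = E_1^inf(T) is closed under x - y + z as long as the result stays in N_0^2.  A set in N_0^2
   with this closure property that is an antichain for the componentwise order lies on a ray
   P + k (M - P), P and M being its two points of smallest first coordinate: subtracting M - P
   from any other point of S stays in S and lowers the first coordinate.  Since T is affinely
   independent, S therefore contains points y < z.  Then alpha + k (z - y) lies in S for all k,
   and adding a difference b - a of points of T that is positive in the coordinate where z - y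
   vanishes yields, for large k, a point of S strictly above alpha in both coordinates. *)

definition parallelogram_closed :: "pt set \<Rightarrow> bool" where
  "parallelogram_closed S \<longleftrightarrow>
     (\<forall>x\<in>S. \<forall>y\<in>S. \<forall>z\<in>S. in_N0sq (x - y + z) \<longrightarrow> x - y + z \<in> S)"

lemma is_rep_finite_supportI:
  assumes "g \<in> G" "finite F" "\<And>a. m a \<noteq> 0 \<Longrightarrow> a \<in> F \<and> a \<in> G \<and> a \<noteq> g"
  shows "is_rep G (g + (\<Sum>a\<in>F. smul (m a) (a - g))) g m"
proof -
  have supp: "{a. m a \<noteq> 0} \<subseteq> F" using assms(3) by blast
  have "(\<Sum>a\<in>F. smul (m a) (a - g)) = (\<Sum>a\<in>{a. m a \<noteq> 0}. smul (m a) (a - g))"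
    by (rule sum.mono_neutral_right[OF assms(2) supp]) (auto simp: smul_def zero_prod_def)
  then show ?thesis
    using assms supp finite_subset unfolding is_rep_def by metis
qed

lemma mem_En_of_rep:
  assumes "is_rep G lam g m" "in_N0sq lam" "rep_cost m \<le> n"
  shows "lam \<in> En n G"
proof -
  have "dG G lam \<le> enat (rep_cost m)"
    unfolding dG_def by (rule INF_lower2[where i = "(g, m)"]) (use assms(1) in auto)
  moreover have "lam \<in> Lam G"
    unfolding Lam_def using assms(1) by blast
  ultimately show ?thesis
    using assms unfolding En_def by (auto intro: order_trans)
qed

lemma subset_En: "G \<subseteq> {v. in_N0sq v} \<Longrightarrow> G \<subseteq> En n G"
  using is_rep_finite_supportI[of _ G "{}" "\<lambda>_. 0"]
  by (auto intro!: mem_En_of_rep simp: rep_cost_def)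

lemma parallelogram_mem_En:
  assumes "0 < n" "x \<in> G" "y \<in> G" "z \<in> G" "in_N0sq (x - y + z)"
  shows "x - y + z \<in> En n G"
proof -
  (* x - y + z = z + (x - z) - (y - z); the coefficient at the base point z must be 0,
     which is harmless because its term vanishes *)
  define m :: "pt \<Rightarrow> int" where
    "m a = (if a = z then 0 else of_bool (a = x) - of_bool (a = y))" for a
  have "(\<Sum>a\<in>{x, y}. smul (m a) (a - z)) = x - y"
  proof (cases "x = y")
    case True
    then show ?thesis by (simp add: m_def smul_def flip: zero_prod_def)
  next
    case False
    then show ?thesis
      by (cases "x = z"; cases "y = z") (auto simp: m_def smul_def minus_prod_def)
  qed
  moreover have "m a \<noteq> 0 \<Longrightarrow> a \<in> {x, y} \<and> a \<in> G \<and> a \<noteq> z" for a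
    using assms by (auto simp: m_def of_bool_def split: if_splits)
  ultimately have "is_rep G (x - y + z) z m"
    using is_rep_finite_supportI[of z G "{x, y}" m] assms(4) by (simp add: add.commute)
  moreover have "rep_cost m \<le> 1"
  proof -
    have "{a. 0 < m a} \<subseteq> {x}" "{a. m a < 0} \<subseteq> {y}" "m x \<le> 1" "- m y \<le> 1"
      by (auto simp: m_def of_bool_def split: if_splits)
    then have "(\<Sum>a | 0 < m a. m a) \<le> 1" "- (\<Sum>a | m a < 0. m a) \<le> 1"
      by (auto simp only: subset_singleton_iff) simp_all
    then show ?thesis
      unfolding rep_cost_def by simp
  qed
  ultimately show ?thesis
    using assms by (auto intro: mem_En_of_rep)
qed

lemma En_iter_subset_N0: "En_iter n k T \<subseteq> {v. in_N0sq v}"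
  by (cases k) (auto simp: En_def)

lemma En_iter_mono: "i \<le> j \<Longrightarrow> En_iter n i T \<subseteq> En_iter n j T"
  by (rule lift_Suc_mono_le[of "\<lambda>k. En_iter n k T"]) (simp_all add: subset_En En_iter_subset_N0)

lemma En_inf_subset_N0: "En_inf n T \<subseteq> {v. in_N0sq v}"
  using En_iter_subset_N0 by (auto simp: En_inf_def)

lemma subset_En_inf: "\<forall>v\<in>T. in_N0sq v \<Longrightarrow> T \<subseteq> En_inf n T"
  using subset_En[of T n] En_iter.simps(1) unfolding En_inf_def by blast

lemma parallelogram_closed_En_inf:
  assumes "0 < n"
  shows "parallelogram_closed (En_inf n T)"
  unfolding parallelogram_closed_def
proof (intro ballI impI)
  fix x y z
  assume "x \<in> En_inf n T" "y \<in> En_inf n T" "z \<in> En_inf n T" and N0: "in_N0sq (x - y + z)"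
  then obtain i j k where "x \<in> En_iter n i T" "y \<in> En_iter n j T" "z \<in> En_iter n k T"
    by (auto simp: En_inf_def)
  then have "x \<in> En_iter n (i + j + k) T" "y \<in> En_iter n (i + j + k) T" "z \<in> En_iter n (i + j + k) T"
    by (auto elim!: En_iter_mono[THEN subsetD, rotated])
  then have "x - y + z \<in> En_iter n (Suc (i + j + k)) T"
    using parallelogram_mem_En[OF assms _ _ _ N0] by simp
  then show "x - y + z \<in> En_inf n T"
    unfolding En_inf_def by blast
qed

lemma to_real2_add_smul: "to_real2 (p + smul c d) = to_real2 p + of_int c *\<^sub>R to_real2 d"
  by (simp add: to_real2_def smul_def)

lemma affine_dependent_if_on_line:
  assumes "card T = 3" "\<forall>t\<in>T. \<exists>c. to_real2 t = p + c *\<^sub>R v"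
  shows "affine_dependent (to_real2 ` T)"
proof -
  have "inj to_real2"
    by (auto simp: inj_def to_real2_def prod_eq_iff)
  then have "card (to_real2 ` T) = 3"
    using assms(1) by (simp add: card_image inj_on_subset)
  then obtain a b c where abc: "to_real2 ` T = {a, b, c}" "a \<noteq> b" "b \<noteq> c" "a \<noteq> c"
    by (auto simp: card_3_iff)
  have "collinear (to_real2 ` T)"
    unfolding collinear_alt using assms(2) by blast
  then show ?thesis
    using abc collinear_3_eq_affine_dependent by metis
qed

lemma exists_fst_less:
  assumes "card T = 3" "\<not> affine_dependent (to_real2 ` T)"
  shows "\<exists>a\<in>T. \<exists>b\<in>T. fst a < fst b"
proof (rule ccontr)
  assume "\<not> ?thesis"
  moreover obtain t0 where "t0 \<in> T"
    using assms(1) by (auto simp: card_3_iff)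
  ultimately have "\<forall>t\<in>T. fst t = fst t0"
    by (meson linorder_neqE)
  then have "\<forall>t\<in>T. to_real2 t = (of_int (fst t0), 0) + of_int (snd t) *\<^sub>R (0, 1)"
    by (simp add: to_real2_def)
  then show False
    using affine_dependent_if_on_line[OF assms(1)] assms(2) by blast
qed

lemma exists_snd_less:
  assumes "card T = 3" "\<not> affine_dependent (to_real2 ` T)"
  shows "\<exists>a\<in>T. \<exists>b\<in>T. snd a < snd b"
proof (rule ccontr)
  assume "\<not> ?thesis"
  moreover obtain t0 where "t0 \<in> T"
    using assms(1) by (auto simp: card_3_iff)
  ultimately have "\<forall>t\<in>T. snd t = snd t0"
    by (meson linorder_neqE)
  then have "\<forall>t\<in>T. to_real2 t = (0, of_int (snd t0)) + of_int (fst t) *\<^sub>R (1, 0)"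
    by (simp add: to_real2_def)
  then show False
    using affine_dependent_if_on_line[OF assms(1)] assms(2) by blast
qed

lemma exists_min_fst:
  assumes "A \<noteq> {}" "A \<subseteq> {v. in_N0sq v}"
  shows "\<exists>p\<in>A. \<forall>w\<in>A. fst p \<le> fst w"
proof -
  obtain a where "a \<in> A"
    using assms(1) by blast
  then obtain p where "p \<in> A" "\<forall>w\<in>A. nat (fst p) \<le> nat (fst w)"
    using ex_has_least_nat[of "\<lambda>w. w \<in> A" a "\<lambda>w. nat (fst w)"] by blast
  moreover have "\<forall>w\<in>A. 0 \<le> fst w"
    using assms(2) by (auto simp: in_N0sq_def)
  ultimately show ?thesis
    using \<open>p \<in> A\<close> by (auto simp: nat_le_eq_zle)
qed

lemma antichain_fst_less_snd_less:
  fixes P M :: "'a::linorder \<times> 'b::linorder"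
  assumes antichain: "\<forall>y\<in>S. \<forall>z\<in>S. y \<le> z \<longrightarrow> y = z"
    and "P \<in> S" "M \<in> S" "P \<noteq> M" "fst P \<le> fst M"
  shows "fst P < fst M \<and> snd M < snd P"
proof -
  have "\<not> P \<le> M" "\<not> M \<le> P"
    using antichain assms(2-4) by blast+
  then show ?thesis
    using assms(5) by (auto simp: less_eq_prod_def)
qed

lemma parallelogram_closed_antichain_ray:
  assumes closed: "parallelogram_closed S" and N0: "S \<subseteq> {v. in_N0sq v}"
    and antichain: "\<forall>y\<in>S. \<forall>z\<in>S. y \<le> z \<longrightarrow> y = z"
    and P: "P \<in> S" "\<forall>w\<in>S. fst P \<le> fst w"
    and M: "M \<in> S - {P}" "\<forall>w\<in>S - {P}. fst M \<le> fst w"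
    and "w \<in> S"
  shows "\<exists>k::nat. w = P + smul (int k) (M - P)"
proof -
  have "P \<noteq> M" "fst P \<le> fst M"
    using M P by auto
  then have fst_PM: "fst P < fst M" and snd_PM: "snd M < snd P"
    using antichain_fst_less_snd_less[OF antichain P(1)] M(1) by auto
  show ?thesis
    using \<open>w \<in> S\<close>
  proof (induction "nat (fst w)" arbitrary: w rule: less_induct)
    case less
    show ?case
    proof (cases "w = P")
      case True
      then show ?thesis
        by (intro exI[of _ 0]) (simp add: smul_def flip: zero_prod_def)
    next
      case False
      let ?w' = "w - M + P"
      have "fst M \<le> fst w"
        using M(2) less.prems False by blast
      then have "in_N0sq ?w'"
        using N0 P(1) less.prems snd_PM by (auto simp: in_N0sq_def)
      then have "?w' \<in> S"
        using closed less.prems M(1) P(1) unfolding parallelogram_closed_def by blast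
      moreover have "nat (fst ?w') < nat (fst w)"
        using \<open>in_N0sq ?w'\<close> fst_PM by (simp add: in_N0sq_def)
      ultimately obtain k where "?w' = P + smul (int k) (M - P)"
        using less.hyps by blast
      then have "w = P + smul (int (Suc k)) (M - P)"
        by (simp add: smul_def prod_eq_iff algebra_simps)
      then show ?thesis
        by blast
    qed
  qed
qed

lemma parallelogram_closed_antichain_on_ray:
  assumes "parallelogram_closed S" "S \<subseteq> {v. in_N0sq v}" "\<forall>y\<in>S. \<forall>z\<in>S. y \<le> z \<longrightarrow> y = z"
  shows "\<exists>p d. \<forall>w\<in>S. \<exists>k::nat. w = p + smul (int k) d"
proof (cases "\<exists>p. S \<subseteq> {p}")
  case True
  then obtain p where "S \<subseteq> {p}" ..
  moreover have "p = p + smul (int 0) 0"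
    by (simp add: smul_def flip: zero_prod_def)
  ultimately have "\<forall>w\<in>S. \<exists>k::nat. w = p + smul (int k) 0"
    by blast
  then show ?thesis
    by blast
next
  case False
  then have "S \<noteq> {}"
    by blast
  then obtain P where P: "P \<in> S" "\<forall>w\<in>S. fst P \<le> fst w"
    using exists_min_fst assms(2) by blast
  moreover have "S - {P} \<noteq> {}"
    using False by blast
  then obtain M where "M \<in> S - {P}" "\<forall>w\<in>S - {P}. fst M \<le> fst w"
    using exists_min_fst[of "S - {P}"] assms(2) by blast
  ultimately show ?thesis
    using parallelogram_closed_antichain_ray[OF assms] by blast
qed

lemma exists_comparable_pair:
  assumes "parallelogram_closed S" "S \<subseteq> {v. in_N0sq v}" "T \<subseteq> S"
    and "card T = 3" "\<not> affine_dependent (to_real2 ` T)"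
  shows "\<exists>y\<in>S. \<exists>z\<in>S. y < z"
proof (rule ccontr)
  assume "\<not> ?thesis"
  then have "\<forall>y\<in>S. \<forall>z\<in>S. y \<le> z \<longrightarrow> y = z"
    using order.not_eq_order_implies_strict by blast
  then obtain p d where "\<forall>w\<in>S. \<exists>k::nat. w = p + smul (int k) d"
    using parallelogram_closed_antichain_on_ray[OF assms(1,2)] by blast
  have "\<exists>c. to_real2 t = to_real2 p + c *\<^sub>R to_real2 d" if t: "t \<in> T" for t
  proof -
    obtain k :: nat where "t = p + smul (int k) d"
      using \<open>\<forall>w\<in>S. \<exists>k::nat. w = p + smul (int k) d\<close> subsetD[OF assms(3) t] by blast
    then have "to_real2 t = to_real2 p + of_int (int k) *\<^sub>R to_real2 d"
      by (simp only: to_real2_add_smul)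
    then show ?thesis ..
  qed
  then have "\<forall>t\<in>T. \<exists>c. to_real2 t = to_real2 p + c *\<^sub>R to_real2 d"
    by blast
  then have "affine_dependent (to_real2 ` T)"
    by (rule affine_dependent_if_on_line[OF assms(4)])
  with assms(5) show False ..
qed

lemma parallelogram_closed_add_multiple:
  assumes closed: "parallelogram_closed S" and N0: "S \<subseteq> {v. in_N0sq v}"
    and "\<alpha> \<in> S" "y \<in> S" "z \<in> S" "y \<le> z"
  shows "\<alpha> + smul (int k) (z - y) \<in> S"
proof (induction k)
  case 0
  show ?case
    using assms(3) by (simp add: smul_def flip: zero_prod_def)
next
  case (Suc k)
  let ?q = "\<alpha> + smul (int k) (z - y)"
  have step: "\<alpha> + smul (int (Suc k)) (z - y) = ?q - y + z"
    by (simp add: smul_def prod_eq_iff algebra_simps)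
  have "in_N0sq \<alpha>"
    using N0 assms(3) by blast
  with \<open>y \<le> z\<close> have "in_N0sq (\<alpha> + smul (int (Suc k)) (z - y))"
    by (simp add: in_N0sq_def less_eq_prod_def smul_def)
  then show ?case
    using closed Suc assms(4,5) unfolding step parallelogram_closed_def by blast
qed

lemma mult_add_pos_if_large:
  fixes d c K :: int
  assumes "0 \<le> d" "\<bar>c\<bar> < K" "0 < d \<or> 0 < c"
  shows "0 < K * d + c"
proof (cases "0 < d")
  case True
  have "0 < K"
    using assms(2) abs_ge_zero by linarith
  with True have "K \<le> K * d"
    by (simp add: mult_le_cancel_left1)
  then show ?thesis
    using assms(2) by linarith
next
  case False
  then show ?thesis
    using assms by simp
qed

lemma parallelogram_closed_exists_strictly_above:
  assumes closed: "parallelogram_closed S" and N0: "S \<subseteq> {v. in_N0sq v}"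
    and "\<alpha> \<in> S" "y \<in> S" "z \<in> S" "y \<le> z" "a \<in> S" "b \<in> S"
    and "fst y < fst z \<or> fst a < fst b" "snd y < snd z \<or> snd a < snd b"
  shows "\<exists>\<beta>\<in>S. fst \<alpha> < fst \<beta> \<and> snd \<alpha> < snd \<beta>"
proof -
  (* K (z - y) outweighs b - a in every coordinate where z - y is positive *)
  define K where "K = \<bar>fst b - fst a\<bar> + \<bar>snd b - snd a\<bar> + 1"
  define q where "q = \<alpha> + smul (int (nat K)) (z - y)"
  have "q \<in> S"
    unfolding q_def using parallelogram_closed_add_multiple[OF closed N0 assms(3-6)] .
  have "0 < K * (fst z - fst y) + (fst b - fst a)" "0 < K * (snd z - snd y) + (snd b - snd a)"
    using assms(6, 9, 10) unfolding K_def
    by (auto intro!: mult_add_pos_if_large simp: less_eq_prod_def)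
  then have above: "fst \<alpha> < fst (q - a + b)" "snd \<alpha> < snd (q - a + b)"
    unfolding q_def K_def by (simp_all add: smul_def)
  moreover have "in_N0sq (q - a + b)"
    using above N0 assms(3) by (force simp: in_N0sq_def)
  then have "q - a + b \<in> S"
    using closed \<open>q \<in> S\<close> assms(7,8) unfolding parallelogram_closed_def by blast
  ultimately show ?thesis
    by blast
qed

lemma exists_pair_complementing:
  fixes y z :: pt
  assumes "card T = 3" "\<not> affine_dependent (to_real2 ` T)" "y < z"
  shows "\<exists>a\<in>T. \<exists>b\<in>T. (fst y < fst z \<or> fst a < fst b) \<and> (snd y < snd z \<or> snd a < snd b)"
proof (cases "fst y < fst z")
  case True
  then show ?thesis
    using exists_snd_less[OF assms(1,2)] by blast
next
  case False
  with \<open>y < z\<close> have "snd y < snd z"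
    by (auto simp: less_prod_def less_eq_prod_def)
  then show ?thesis
    using exists_fst_less[OF assms(1,2)] by blast
qed

theorem lemma3p6:
  fixes T :: "pt set"
  assumes "card T = 3"
    and "\<forall>v\<in>T. in_N0sq v"
    and "\<not> affine_dependent (to_real2 ` T)"
  shows "\<forall>\<alpha>\<in>T. \<exists>\<beta>\<in>En_inf 1 T - {\<alpha>}. fst \<beta> - fst \<alpha> > 0 \<and> snd \<beta> - snd \<alpha> > 0"
proof
  fix \<alpha> assume "\<alpha> \<in> T"
  let ?S = "En_inf 1 T"
  have closed: "parallelogram_closed ?S"
    by (simp add: parallelogram_closed_En_inf)
  have N0: "?S \<subseteq> {v. in_N0sq v}"
    by (rule En_inf_subset_N0)
  have "T \<subseteq> ?S"
    using assms(2) by (rule subset_En_inf)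
  then obtain y z where "y \<in> ?S" "z \<in> ?S" "y < z"
    using exists_comparable_pair[OF closed N0 _ assms(1,3)] by blast
  moreover obtain a b where "a \<in> T" "b \<in> T"
    and complement: "fst y < fst z \<or> fst a < fst b" "snd y < snd z \<or> snd a < snd b"
    using exists_pair_complementing[OF assms(1,3) \<open>y < z\<close>] by blast
  ultimately obtain \<beta> where "\<beta> \<in> ?S" "fst \<alpha> < fst \<beta>" "snd \<alpha> < snd \<beta>"
    using parallelogram_closed_exists_strictly_above
        [OF closed N0 _ _ _ less_imp_le[OF \<open>y < z\<close>] _ _ complement]
      \<open>\<alpha> \<in> T\<close> \<open>T \<subseteq> ?S\<close> by blast
  then show "\<exists>\<beta>\<in>En_inf 1 T - {\<alpha>}. fst \<beta> - fst \<alpha> > 0 \<and> snd \<beta> - snd \<alpha> > 0"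
    by force
qed

end
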